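(* Let $q>0$ be a constant and consider $$u_t=d_1\Delta u+u\left[\frac{(1-u)(u-p)}{1+qv}-av\right],\qquad v_t=d_2\Delta v+bv(1-v-cu)\quad\text{in }\Omega\times(0,\infty),$$ with $\partial_\nu u=\partial_\nu v=0$ on $\partial\Omega$. Let $(u^*,v^* )$ be a positive equilibrium of the kinetic system $\dot u=u[\frac{(1-u)(u-p)}{1+qv}-av]$, $\dot v=bv(1-v-cu)$ that is linearly asymptotically stable for the kinetic system (trace of the Jacobian negative, determinant positive). Then for all parameter values and all diffusion coefficients $d_1,d_2>0$, the spatially homogeneous steady state $(u^*,v^* )$ does not undergo diffusion-driven (Turing) instability: for every eigenvalue $\mu\ge0$ of $-\Delta$ with Neumann boundary conditions, all eigenvalues of $J(u^*,v^* )-\mu\,\mathrm{diag}(d_1,d_2)$ have negative real part, where $J(u^*,v^* )$ is the kinetic Jacobian.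
   Context: $\Omega\subset\mathbb{R}^n$ is a bounded domain with smooth boundary and outward normal $\nu$; $a,b,c>0$, $0\le p<1$. *)

theory Defs
  imports "HOL-Analysis.Analysis"
begin

definition kin_f :: "real \<Rightarrow> real \<Rightarrow> real \<Rightarrow> real \<Rightarrow> real \<Rightarrow> real" where
  "kin_f p q a u v = u * ((1 - u) * (u - p) / (1 + q * v) - a * v)"

definition kin_g :: "real \<Rightarrow> real \<Rightarrow> real \<Rightarrow> real \<Rightarrow> real" where
  "kin_g b c u v = b * v * (1 - v - c * u)"

definition jac11 where "jac11 p q a u0 v0 = deriv (\<lambda>u. kin_f p q a u v0) u0"
definition jac12 where "jac12 p q a u0 v0 = deriv (\<lambda>v. kin_f p q a u0 v) v0"
definition jac21 where "jac21 b c u0 v0 = deriv (\<lambda>u. kin_g b c u v0) u0"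
definition jac22 where "jac22 b c u0 v0 = deriv (\<lambda>v. kin_g b c u0 v) v0"

definition eigenvalue2 :: "real \<Rightarrow> real \<Rightarrow> real \<Rightarrow> real \<Rightarrow> complex \<Rightarrow> bool" where
  "eigenvalue2 m11 m12 m21 m22 z \<longleftrightarrow>
     (of_real m11 - z) * (of_real m22 - z) - of_real m12 * of_real m21 = 0"

definition pd :: "('n::euclidean_space \<Rightarrow> real) \<Rightarrow> 'n \<Rightarrow> 'n \<Rightarrow> real" where
  "pd \<phi> i x = deriv (\<lambda>s. \<phi> (x + s *\<^sub>R i)) 0"

definition laplacian :: "('n::euclidean_space \<Rightarrow> real) \<Rightarrow> 'n \<Rightarrow> real" where
  "laplacian \<phi> x = (\<Sum>i\<in>Basis. pd (pd \<phi> i) i x)"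

definition normal_deriv :: "('n::euclidean_space \<Rightarrow> real) \<Rightarrow> ('n \<Rightarrow> 'n) \<Rightarrow> 'n \<Rightarrow> real" where
  "normal_deriv \<phi> \<nu> x = (\<Sum>i\<in>Basis. pd \<phi> i x * (\<nu> x \<bullet> i))"

definition neumann_eigenvalue :: "'n::euclidean_space set \<Rightarrow> ('n \<Rightarrow> 'n) \<Rightarrow> real \<Rightarrow> bool" where
  "neumann_eigenvalue \<Omega> \<nu> \<mu> \<longleftrightarrow>
     (\<exists>\<phi> U. open U \<and> closure \<Omega> \<subseteq> U \<and> \<phi> differentiable_on U \<and>
        (\<forall>i\<in>Basis. pd \<phi> i differentiable_on U \<and> continuous_on U (pd (pd \<phi> i) i)) \<and>
        (\<forall>i\<in>Basis. \<forall>x\<in>U. ((\<lambda>s. \<phi> (x + s *\<^sub>R i)) has_real_derivative pd \<phi> i x) (at 0)) \<and>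
        (\<exists>x\<in>\<Omega>. \<phi> x \<noteq> 0) \<and>
        (\<forall>x\<in>\<Omega>. - laplacian \<phi> x = \<mu> * \<phi> x) \<and>
        (\<forall>x\<in>frontier \<Omega>. normal_deriv \<phi> \<nu> x = 0))"

end

theory Submission
  imports Defs
begin

text \<open>At a positive equilibrium the kinetic Jacobian has the sign pattern
  \<open>J12 < 0\<close>, \<open>J21 < 0\<close>, \<open>J22 = -b v* < 0\<close>. Hence \<open>J12 J21 > 0\<close>, and a positive
  determinant forces \<open>J11 J22 > 0\<close>, i.e. \<open>J11 < 0\<close>. With both diagonal entries negative,
  subtracting \<open>\<mu> diag(d1, d2)\<close> with \<open>\<mu> \<ge> 0\<close> only decreases the trace and increases the
  determinant, so the Routh-Hurwitz conditions persist. The Neumann spectrum enters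
  only through \<open>\<mu> \<ge> 0\<close>.\<close>

lemma eigenvalue2_Re_neg:
  fixes m11 m12 m21 m22 :: real and z :: complex
  assumes trace: "m11 + m22 < 0" and det: "m11 * m22 - m12 * m21 > 0"
    and "eigenvalue2 m11 m12 m21 m22 z"
  shows "Re z < 0"
proof -
  obtain x y where z: "z = Complex x y" by (cases z)
  from assms(3) have e: "(complex_of_real m11 - z) * (of_real m22 - z) - of_real m12 * of_real m21 = 0"
    unfolding eigenvalue2_def .
  have re: "x * x - (m11 + m22) * x + (m11 * m22 - m12 * m21) = y * y"
    using arg_cong[OF e, of Re] by (simp add: z algebra_simps)
  have im: "y * (m11 + m22 - 2 * x) = 0"
    using arg_cong[OF e, of Im] by (simp add: z algebra_simps)
  show ?thesis
  proof (cases "y = 0")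
    case True
    have "x < 0"
    proof (rule ccontr)
      assume "\<not> x < 0"
      then have "x * x \<ge> 0" "- (m11 + m22) * x \<ge> 0" using trace by simp_all
      moreover have "y * y = 0" using True by simp
      ultimately show False using re det by linarith
    qed
    then show ?thesis using z by simp
  next
    case False
    then have "x = (m11 + m22) / 2" using im by simp
    then show ?thesis using trace z by simp
  qed
qed

lemma diffusion_preserves_stability:
  fixes m11 m12 m21 m22 d1 d2 \<mu> :: real
  assumes "m11 < 0" "m22 < 0" "m11 * m22 - m12 * m21 > 0"
    and "d1 \<ge> 0" "d2 \<ge> 0" "\<mu> \<ge> 0"
  shows "(m11 - \<mu> * d1) + (m22 - \<mu> * d2) < 0"
    and "(m11 - \<mu> * d1) * (m22 - \<mu> * d2) - m12 * m21 > 0"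
proof -
  have "\<mu> * d1 \<ge> 0" "\<mu> * d2 \<ge> 0" using assms by simp_all
  then show "(m11 - \<mu> * d1) + (m22 - \<mu> * d2) < 0" using assms by linarith
  have "(m11 - \<mu> * d1) * (m22 - \<mu> * d2) - m12 * m21 =
        (m11 * m22 - m12 * m21) + \<mu> * d1 * (- m22) + \<mu> * d2 * (- m11) + \<mu> * \<mu> * (d1 * d2)"
    by (simp add: algebra_simps)
  moreover have "\<mu> * d1 * (- m22) \<ge> 0" "\<mu> * d2 * (- m11) \<ge> 0" "\<mu> * \<mu> * (d1 * d2) \<ge> 0"
    using assms by (simp_all add: mult_nonneg_nonpos mult_nonneg_nonneg)
  ultimately show "(m11 - \<mu> * d1) * (m22 - \<mu> * d2) - m12 * m21 > 0"
    using assms(3) by linarith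
qed

lemma jac21_eq: "jac21 b c u v = - b * c * v"
proof -
  have "((\<lambda>u. kin_g b c u v) has_real_derivative - b * c * v) (at u)"
    unfolding kin_g_def by (auto intro!: derivative_eq_intros simp: algebra_simps)
  then show ?thesis unfolding jac21_def by (rule DERIV_imp_deriv)
qed

lemma jac22_eq: "jac22 b c u v = b * (1 - v - c * u) - b * v"
proof -
  have "((\<lambda>v. kin_g b c u v) has_real_derivative b * (1 - v - c * u) - b * v) (at v)"
    unfolding kin_g_def by (auto intro!: derivative_eq_intros simp: algebra_simps)
  then show ?thesis unfolding jac22_def by (rule DERIV_imp_deriv)
qed

lemma jac12_eq:
  assumes "1 + q * v \<noteq> 0"
  shows "jac12 p q a u v = - u * ((1 - u) * (u - p) * q / (1 + q * v)\<^sup>2 + a)"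
proof -
  have "((\<lambda>v. kin_f p q a u v) has_real_derivative u * (- (1 - u) * (u - p) * q / (1 + q * v)\<^sup>2 - a)) (at v)"
    unfolding kin_f_def using assms
    by (auto intro!: derivative_eq_intros simp: field_simps power2_eq_square)
  moreover have "u * (- (1 - u) * (u - p) * q / (1 + q * v)\<^sup>2 - a) = - u * ((1 - u) * (u - p) * q / (1 + q * v)\<^sup>2 + a)"
    by (simp add: algebra_simps)
  ultimately show ?thesis unfolding jac12_def by (simp add: DERIV_imp_deriv)
qed

lemma jac21_neg:
  assumes "b > 0" "c > 0" "v > 0"
  shows "jac21 b c u v < 0"
  using assms by (simp add: jac21_eq)

lemma jac22_neg_at_equilibrium:
  assumes "b > 0" "v > 0" "kin_g b c u v = 0"
  shows "jac22 b c u v < 0"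
proof -
  have "1 - v - c * u = 0" using assms unfolding kin_g_def by simp
  then show ?thesis using assms by (simp add: jac22_eq)
qed

lemma jac12_neg_at_equilibrium:
  assumes "a > 0" "q > 0" "u > 0" "v > 0" "kin_f p q a u v = 0"
  shows "jac12 p q a u v < 0"
proof -
  have qv: "1 + q * v > 0" using assms by (simp add: add_pos_pos)
  have "(1 - u) * (u - p) / (1 + q * v) = a * v"
    using assms unfolding kin_f_def by simp
  then have "(1 - u) * (u - p) = a * v * (1 + q * v)" using qv by (simp add: field_simps)
  then have "(1 - u) * (u - p) > 0" using assms qv by simp
  then have "(1 - u) * (u - p) * q / (1 + q * v)\<^sup>2 > 0" using assms qv by simp
  then have "(1 - u) * (u - p) * q / (1 + q * v)\<^sup>2 + a > 0"
    using assms(1) by linarith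
  then show ?thesis using qv assms(3) by (simp add: jac12_eq)
qed

lemma jac11_neg_at_stable_equilibrium:
  assumes "a > 0" "b > 0" "c > 0" "q > 0" "u > 0" "v > 0"
    and "kin_f p q a u v = 0" "kin_g b c u v = 0"
    and "jac11 p q a u v * jac22 b c u v - jac12 p q a u v * jac21 b c u v > 0"
  shows "jac11 p q a u v < 0"
proof -
  have "jac12 p q a u v < 0" "jac21 b c u v < 0"
    using jac12_neg_at_equilibrium[OF assms(1,4,5,6,7)] jac21_neg[OF assms(2,3,6)] .
  then have "jac12 p q a u v * jac21 b c u v > 0" by (rule mult_neg_neg)
  then have "jac11 p q a u v * jac22 b c u v > 0" using assms(9) by linarith
  then show ?thesis
    using jac22_neg_at_equilibrium[OF assms(2,6,8)] by (simp add: zero_less_mult_iff)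
qed

theorem mainTheorem17:
  fixes \<Omega> :: "'n::euclidean_space set" and \<nu> :: "'n \<Rightarrow> 'n"
    and a b c p q d1 d2 us vs :: real
  assumes "open \<Omega>" and "bounded \<Omega>" and "connected \<Omega>" and "\<Omega> \<noteq> {}"
    and "\<forall>x\<in>frontier \<Omega>. norm (\<nu> x) = 1"
    and "a > 0" and "b > 0" and "c > 0" and "0 \<le> p" and "p < 1" and "q > 0"
    and "d1 > 0" and "d2 > 0"
    and "us > 0" and "vs > 0"
    and "kin_f p q a us vs = 0" and "kin_g b c us vs = 0"
    and "jac11 p q a us vs + jac22 b c us vs < 0"
    and "jac11 p q a us vs * jac22 b c us vs - jac12 p q a us vs * jac21 b c us vs > 0"
  shows "\<forall>\<mu>. neumann_eigenvalue \<Omega> \<nu> \<mu> \<and> \<mu> \<ge> 0 \<longrightarrow>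
           (\<forall>z. eigenvalue2 (jac11 p q a us vs - \<mu> * d1) (jac12 p q a us vs)
                             (jac21 b c us vs) (jac22 b c us vs - \<mu> * d2) z \<longrightarrow> Re z < 0)"
proof (intro allI impI)
  fix \<mu> z
  assume "neumann_eigenvalue \<Omega> \<nu> \<mu> \<and> \<mu> \<ge> 0"
  then have \<mu>: "\<mu> \<ge> 0" by simp
  assume eig: "eigenvalue2 (jac11 p q a us vs - \<mu> * d1) (jac12 p q a us vs)
                           (jac21 b c us vs) (jac22 b c us vs - \<mu> * d2) z"
  have J11: "jac11 p q a us vs < 0"
    using jac11_neg_at_stable_equilibrium assms(6-8,11,14-17,19) .
  have J22: "jac22 b c us vs < 0"
    using jac22_neg_at_equilibrium assms(7,15,17) .
  have "d1 \<ge> 0" "d2 \<ge> 0" using assms(12,13) by simp_all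
  note stable = diffusion_preserves_stability[OF J11 J22 assms(19) this \<mu>]
  show "Re z < 0" using eigenvalue2_Re_neg[OF stable eig] .
qed

end
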